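(* Let $v\equiv 1$ or $7\pmod{24}$ with $v\ge 7$, and let $n=\frac{v-1}{6}$. For every integer $i$ with $0\le i\le n$ there exists a cyclic three-fold triple system CTS$(v,3)$ with fine structure $(c_1,c_2,c_3)$ satisfying $c_2=n-i$ and $c_3=i$ (and hence $c_1=3n-2c_2-3c_3$).
   Context: A cyclic $\lambda$-fold triple system CTS$(v,\lambda)$ is a multiset $\mathcal B$ of 3-element subsets (blocks) of $\mathbb Z_v$ such that every 2-element subset of $\mathbb Z_v$ is contained in exactly $\lambda$ blocks (counted with multiplicity), and $\mathcal B$ is invariant under the translation $x\mapsto x+1$. Thus $\mathcal B$ is a union of translation orbits of 3-subsets with multiplicities; a base block is an orbit representative. The fine structure is $(c_1,\ldots,c_\lambda)$, where $c_i$ is the number of distinct base blocks (orbits) occurring with multiplicity exactly $i$. For $\lambda=3$ the paper writes the fine structure as the pair $(t,s)=(c_2,c_3)$. *)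

theory Defs
  imports Main "HOL-Library.Multiset"
begin

text \<open>Z_v is represented by {0..<v} (v :: nat) with arithmetic mod v.\<close>

definition shift :: "nat \<Rightarrow> nat \<Rightarrow> nat set \<Rightarrow> nat set" where
  "shift v k B = (\<lambda>x. (x + k) mod v) ` B"

definition is_CTS :: "nat \<Rightarrow> nat \<Rightarrow> nat set multiset \<Rightarrow> bool" where
  "is_CTS v lam M \<longleftrightarrow>
     (\<forall>B \<in># M. B \<subseteq> {..<v} \<and> card B = 3) \<and>
     (\<forall>x<v. \<forall>y<v. x \<noteq> y \<longrightarrow> size (filter_mset (\<lambda>B. {x, y} \<subseteq> B) M) = lam) \<and>
     image_mset (shift v 1) M = M"

definition orbit :: "nat \<Rightarrow> nat set \<Rightarrow> nat set set" where
  "orbit v B = {shift v k B | k. k < v}"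

definition fine_c :: "nat \<Rightarrow> nat set multiset \<Rightarrow> nat \<Rightarrow> nat" where
  "fine_c v M i = card {orbit v B | B. B \<in># M \<and> count M B = i}"

end

theory Submission
  imports Defs
begin

text \<open>Write \<open>v = 6n + 1\<close>; the congruence conditions on \<open>v\<close> say exactly that \<open>n \<equiv> 0, 1 (mod 4)\<close>,
  so there is a Skolem sequence of order \<open>n\<close>: numbers \<open>a\<^sub>j\<close> such that the pairs
  \<open>{a\<^sub>j, a\<^sub>j + j}\<close>, \<open>1 \<le> j \<le> n\<close>, partition \<open>{1, \<dots>, 2n}\<close>. Then the triples
  \<open>{j, a\<^sub>j + n, a\<^sub>j + j + n}\<close> partition \<open>{1, \<dots>, 3n}\<close>, so every difference \<open>\<plusminus>e\<close> in \<open>\<int>\<^sub>v\<close>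
  occurs exactly once among the blocks \<open>B\<^sub>j = {0, j, a\<^sub>j + j + n}\<close>, which therefore are the base
  blocks of a cyclic Steiner triple system. The block \<open>B\<^sub>j' = {0, a\<^sub>j + n, a\<^sub>j + j + n}\<close> has the
  same differences but lies in a different orbit. Taking \<open>B\<^sub>j\<close> three times for \<open>j \<le> i\<close>, and
  \<open>B\<^sub>j\<close> twice together with \<open>B\<^sub>j'\<close> once for \<open>j > i\<close>, covers every difference three times and
  yields the fine structure \<open>(n - i, n - i, i)\<close>.\<close>

section \<open>Translates in \<open>\<int>\<^sub>v\<close>\<close>

lemma card_filter_eq_sum: "finite A \<Longrightarrow> card {x \<in> A. P x} = (\<Sum>x\<in>A. if P x then 1 else 0)"
  by (simp only: card_eq_sum sum.inter_filter)

lemma min_diff_mem_iff: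
  fixes d v :: nat
  assumes "\<forall>e\<in>S. 2 * e < v" "d < v"
  shows "min d (v - d) \<in> S \<longleftrightarrow> d \<in> S \<or> v - d \<in> S"
  using assms by (auto simp: min_def)

lemma mod_less_double: "(x::nat) < 2 * v \<Longrightarrow> x mod v = (if x < v then x else x - v)"
  by (simp add: le_mod_geq)

lemma mod_sub_add_cancel: "(x::nat) < v \<Longrightarrow> k \<le> v \<Longrightarrow> ((x + v - k) mod v + k) mod v = x"
  by (simp add: mod_add_left_eq)

lemma mod_add_sub_cancel: "(x::nat) < v \<Longrightarrow> k < v \<Longrightarrow> ((x + k) mod v + v - k) mod v = x"
  by (cases "x + k < v") (simp_all add: mod_less_double)

lemma shift_add: "shift v a (shift v b B) = shift v (a + b) B"
  unfolding shift_def image_image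
proof (rule image_cong)
  fix x
  have "((x + b) mod v + a) mod v = (x + b + a) mod v" by (rule mod_add_left_eq)
  then show "((x + b) mod v + a) mod v = (x + (a + b)) mod v" by (simp add: ac_simps)
qed simp

lemma shift_mod: "shift v (k mod v) B = shift v k B"
  unfolding shift_def by (rule image_cong) (simp_all add: mod_add_right_eq)

lemma shift_0: "B \<subseteq> {..<v} \<Longrightarrow> shift v 0 B = B"
  unfolding shift_def by (force simp: image_iff subset_eq)

lemma shift_subset: "0 < v \<Longrightarrow> shift v k B \<subseteq> {..<v}"
  unfolding shift_def by auto

lemma card_shift:
  assumes "B \<subseteq> {..<v}" "k < v"
  shows "card (shift v k B) = card B"
proof -
  have "inj_on (\<lambda>x. (x + k) mod v) {..<v}"
    by (rule inj_on_inverseI[where g = "\<lambda>y. (y + v - k) mod v"]) (use assms in \<open>simp add: mod_add_sub_cancel\<close>)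
  then show ?thesis
    unfolding shift_def using assms(1) by (simp add: card_image inj_on_subset)
qed

lemma mem_shift:
  assumes "B \<subseteq> {..<v}" "x < v" "k < v"
  shows "x \<in> shift v k B \<longleftrightarrow> (x + v - k) mod v \<in> B"
proof
  assume "x \<in> shift v k B"
  then obtain t where "t \<in> B" "x = (t + k) mod v" unfolding shift_def by blast
  then show "(x + v - k) mod v \<in> B" using assms by (simp add: mod_add_sub_cancel subset_eq)
next
  assume "(x + v - k) mod v \<in> B"
  moreover have "x = ((x + v - k) mod v + k) mod v" using assms by (simp add: mod_sub_add_cancel)
  ultimately show "x \<in> shift v k B" unfolding shift_def by blast
qed

lemma orbit_shift:
  assumes "B \<subseteq> {..<v}" "k < v"
  shows "orbit v (shift v k B) = orbit v B"
proof (unfold orbit_def, intro equalityI subsetI)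
  fix X assume "X \<in> {shift v j (shift v k B) | j. j < v}"
  then obtain j where "X = shift v ((j + k) mod v) B" by (auto simp: shift_add shift_mod)
  moreover have "(j + k) mod v < v" using assms by simp
  ultimately show "X \<in> {shift v j B | j. j < v}" by blast
next
  fix X assume "X \<in> {shift v m B | m. m < v}"
  then obtain m where m: "m < v" "X = shift v m B" by blast
  then have "X = shift v ((m + v - k) mod v) (shift v k B)"
    using assms shift_mod[of v "(m + v - k) mod v + k" B] by (simp add: shift_add mod_sub_add_cancel)
  moreover have "(m + v - k) mod v < v" using m by simp
  ultimately show "X \<in> {shift v j (shift v k B) | j. j < v}" by blast
qed

text \<open>\<open>k \<mapsto> x - k\<close> identifies the translates through \<open>{x, y}\<close> with the elements \<open>t\<close> of the
  block such that \<open>t + (y - x)\<close> is again in the block.\<close>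
lemma card_translates_containing_pair:
  assumes B: "B \<subseteq> {..<v}" and xy: "x < v" "y < v"
  shows "card {k. k < v \<and> {x, y} \<subseteq> shift v k B} = card {t \<in> B. (t + (y + v - x) mod v) mod v \<in> B}"
proof -
  let ?f = "\<lambda>k. (x + v - k) mod v"
  have ff: "?f (?f k) = k" if "k < v" for k
  proof (cases "k \<le> x")
    case True
    then have "?f k = x - k" using xy by (simp add: le_mod_geq)
    then show ?thesis using True that by simp
  next
    case False
    then show ?thesis using that xy by simp
  qed
  have y_shift: "(y + v - k) mod v = (?f k + (y + v - x) mod v) mod v" if "k < v" for k
  proof -
    have "(?f k + (y + v - x) mod v) mod v = ((x + v - k) + (y + v - x)) mod v"
      by (simp add: mod_add_eq)
    also have "(x + v - k) + (y + v - x) = (y + v - k) + v" using that xy by simp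
    finally show ?thesis by simp
  qed
  have mem_iff: "{x, y} \<subseteq> shift v k B \<longleftrightarrow> ?f k \<in> {t \<in> B. (t + (y + v - x) mod v) mod v \<in> B}"
    if "k < v" for k
    using mem_shift[OF B xy(1) that] mem_shift[OF B xy(2) that] y_shift[OF that] by simp
  have "{k. k < v \<and> {x, y} \<subseteq> shift v k B} = ?f ` {t \<in> B. (t + (y + v - x) mod v) mod v \<in> B}"
  proof (intro equalityI subsetI)
    fix k assume "k \<in> {k. k < v \<and> {x, y} \<subseteq> shift v k B}"
    then show "k \<in> ?f ` {t \<in> B. (t + (y + v - x) mod v) mod v \<in> B}"
      using mem_iff ff by (metis (lifting) image_eqI mem_Collect_eq)
  next
    fix k assume "k \<in> ?f ` {t \<in> B. (t + (y + v - x) mod v) mod v \<in> B}"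
    then obtain t where t: "t \<in> {t \<in> B. (t + (y + v - x) mod v) mod v \<in> B}" "k = ?f t" by blast
    moreover have "t < v" using t B by auto
    ultimately show "k \<in> {k. k < v \<and> {x, y} \<subseteq> shift v k B}"
      using mem_iff[of k] ff[of t] by simp
  qed
  moreover have "inj_on ?f {t \<in> B. (t + (y + v - x) mod v) mod v \<in> B}"
    by (rule inj_on_inverseI[where g = ?f]) (use ff B in auto)
  ultimately show ?thesis by (simp add: card_image)
qed

section \<open>Short base blocks\<close>

definition base_block :: "nat \<times> nat \<Rightarrow> nat set" where
  "base_block b = {0, fst b, fst b + snd b}"

definition differences :: "nat \<times> nat \<Rightarrow> nat set" where
  "differences b = {fst b, snd b, fst b + snd b}"

definition short_pair :: "nat \<Rightarrow> nat \<times> nat \<Rightarrow> bool" where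
  "short_pair v b \<longleftrightarrow> 0 < fst b \<and> 0 < snd b \<and> fst b \<noteq> snd b \<and> 2 * (fst b + snd b) < v"

lemma base_block_subset: "short_pair v b \<Longrightarrow> base_block b \<subseteq> {..<v}"
  unfolding short_pair_def base_block_def by auto

lemma card_base_block: "short_pair v b \<Longrightarrow> card (base_block b) = 3"
  unfolding short_pair_def base_block_def by simp

text \<open>The six differences \<open>\<plusminus>p, \<plusminus>q, \<plusminus>(p + q)\<close> of \<open>{0, p, p + q}\<close> are distinct and nonzero
  in \<open>\<int>\<^sub>v\<close>: each is realised by exactly one element \<open>t\<close> of the block.\<close>
lemma card_base_block_difference:
  assumes b: "short_pair v b" and d: "0 < d" "d < v"
  shows "card {t \<in> base_block b. (t + d) mod v \<in> base_block b} =
    (if min d (v - d) \<in> differences b then 1 else 0)"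
proof -
  obtain p q where pq: "b = (p, q)" by fastforce
  have pq': "0 < p" "0 < q" "p \<noteq> q" "2 * (p + q) < v" using b unfolding pq short_pair_def by auto
  define e where "e = v - d"
  have e: "d + e = v" "0 < e" using d unfolding e_def by simp_all
  let ?B = "{0, p, p + q}" and ?P = "\<lambda>t. (t + d) mod v \<in> {0, p, p + q}"
  have "card {t \<in> ?B. ?P t} = (\<Sum>t\<in>?B. if ?P t then 1 else 0)"
    by (rule card_filter_eq_sum) simp
  also have "\<dots> = (if ?P 0 then 1 else 0) + (if ?P p then 1 else 0) + (if ?P (p + q) then 1 else 0)"
    using pq' by simp
  also have "?P 0 \<longleftrightarrow> d = p \<or> d = p + q" using d by simp
  also have "?P p \<longleftrightarrow> d = q \<or> e = p"
    using pq' d e by (cases "p + d < v") (auto simp: mod_less_double)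
  also have "?P (p + q) \<longleftrightarrow> e = q \<or> e = p + q"
    using pq' d e by (cases "p + q + d < v") (auto simp: mod_less_double)
  also have "(if d = p \<or> d = p + q then 1 else 0) + (if d = q \<or> e = p then 1 else 0)
      + (if e = q \<or> e = p + q then 1 else 0) = (if d \<in> {p, q, p + q} \<or> e \<in> {p, q, p + q} then 1 else (0::nat))"
    using pq' e by auto
  also have "d \<in> {p, q, p + q} \<or> e \<in> {p, q, p + q} \<longleftrightarrow> min d (v - d) \<in> {p, q, p + q}"
    unfolding e_def using pq' d by (subst min_diff_mem_iff) auto
  finally show ?thesis unfolding pq base_block_def differences_def by simp
qed

lemma base_block_inj:
  fixes p q p' q' :: nat
  assumes eq: "{0, p, p + q} = {0, p', p' + q'}" and pos: "0 < p" "0 < q" "0 < p'" "0 < q'"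
  shows "p = p' \<and> q = q'"
proof -
  have mem: "x \<in> {0, p, p + q} \<longleftrightarrow> x \<in> {0, p', p' + q'}" for x using eq by simp
  have "p = p' \<or> p = p' + q'" "p' = p \<or> p' = p + q" "p + q = p' \<or> p + q = p' + q'"
    using mem[of p] mem[of p'] mem[of "p + q"] pos by simp_all
  then show ?thesis using pos by linarith
qed

text \<open>A short block lies in \<open>{0, \<dots>, (v - 1) div 2}\<close>, so two of its translates can only meet
  \<open>0\<close> and each other's starting point if they coincide.\<close>
lemma shift_base_block_eq:
  assumes b: "short_pair v b" "short_pair v b'" and k: "k < v" "k' < v"
    and eq: "shift v k (base_block b) = shift v k' (base_block b')"
  shows "b = b' \<and> k = k'"
proof -
  define c where "c = (k + (v - k')) mod v"
  have B: "base_block b \<subseteq> {..<v}" "base_block b' \<subseteq> {..<v}"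
    using b by (simp_all add: base_block_subset)
  have "shift v c (base_block b) = shift v (v - k') (shift v k' (base_block b'))"
    unfolding c_def shift_mod eq[symmetric] shift_add by (simp add: add.commute)
  also have "\<dots> = base_block b'"
    using k shift_mod[of v v] shift_0[OF B(2)] by (simp add: shift_add)
  finally have e: "shift v c (base_block b) = base_block b'" .
  have "c < v" unfolding c_def using k by simp
  then have "c \<in> shift v c (base_block b)" unfolding shift_def base_block_def by auto
  then have "c \<in> base_block b'" using e by simp
  then have c_le: "2 * c < v" using b(2) unfolding base_block_def short_pair_def by auto
  have "0 \<in> shift v c (base_block b)" using e by (simp add: base_block_def)
  then obtain t where t: "t \<in> base_block b" "(t + c) mod v = 0" unfolding shift_def by auto
  have "2 * t < v" using t(1) b(1) unfolding base_block_def short_pair_def by auto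
  then have c0: "c = 0" using t(2) c_le by simp
  then have "base_block b = base_block b'" using e shift_0[OF B(1)] by simp
  then have "b = b'"
    using b base_block_inj[of "fst b" "snd b" "fst b'" "snd b'"] unfolding base_block_def short_pair_def
    by (simp add: prod_eq_iff)
  moreover have "k = k'" using c0 k unfolding c_def by (auto simp: mod_less_double split: if_splits)
  ultimately show ?thesis by simp
qed

section \<open>Cyclic designs generated by base blocks\<close>

definition translates :: "nat \<Rightarrow> nat set \<Rightarrow> nat set multiset" where
  "translates v B = (\<Sum>k<v. {#shift v k B#})"

definition cyclic_design :: "nat \<Rightarrow> (nat \<times> nat) set \<Rightarrow> (nat \<times> nat \<Rightarrow> nat) \<Rightarrow> nat set multiset" where
  "cyclic_design v Bs mu = (\<Sum>b\<in>Bs. repeat_mset (mu b) (translates v (base_block b)))"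

lemma filter_mset_sum: "filter_mset P (sum f A) = (\<Sum>a\<in>A. filter_mset P (f a))"
  by (induction A rule: infinite_finite_induct) simp_all

lemma image_mset_sum: "image_mset g (sum f A) = (\<Sum>a\<in>A. image_mset g (f a))"
  by (induction A rule: infinite_finite_induct) simp_all

lemma filter_mset_repeat_mset: "filter_mset P (repeat_mset n A) = repeat_mset n (filter_mset P A)"
  by (induction n) simp_all

lemma image_mset_repeat_mset: "image_mset f (repeat_mset n A) = repeat_mset n (image_mset f A)"
  by (induction n) simp_all

lemma size_filter_translates:
  "size (filter_mset P (translates v B)) = card {k. k < v \<and> P (shift v k B)}"
proof -
  have "size (filter_mset P (translates v B)) = (\<Sum>k<v. if P (shift v k B) then 1 else 0)"
    unfolding translates_def filter_mset_sum size_multiset_sum by (intro sum.cong) auto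
  also have "\<dots> = card {k \<in> {..<v}. P (shift v k B)}" by (rule card_filter_eq_sum[symmetric]) simp
  finally show ?thesis by simp
qed

lemma count_translates: "count (translates v B) X = card {k. k < v \<and> shift v k B = X}"
  unfolding count_conv_size_mset size_filter_translates by (simp add: eq_commute)

lemma image_mset_shift_translates:
  assumes "B \<subseteq> {..<v}"
  shows "image_mset (shift v 1) (translates v B) = translates v B"
proof -
  have "image_mset (shift v 1) (translates v B) = (\<Sum>k<v. {#shift v (Suc k) B#})"
    unfolding translates_def image_mset_sum by (simp add: shift_add)
  also have "\<dots> = translates v B"
    using sum.lessThan_Suc_shift[of "\<lambda>k. {#shift v k B#}" v] sum.lessThan_Suc[of "\<lambda>k. {#shift v k B#}" v]
      shift_mod[of v v B] shift_0[OF assms]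
    unfolding translates_def by (simp add: add.commute)
  finally show ?thesis .
qed

lemma mem_cyclic_design:
  assumes "X \<in># cyclic_design v Bs mu" "finite Bs"
  obtains b k where "b \<in> Bs" "k < v" "X = shift v k (base_block b)"
proof -
  obtain b where b: "b \<in> Bs" "X \<in># repeat_mset (mu b) (translates v (base_block b))"
    using assms unfolding cyclic_design_def by (auto simp: set_mset_sum)
  then have "X \<in># translates v (base_block b)" by (metis count_greater_zero_iff count_repeat_mset mult_eq_0_iff not_gr_zero)
  then obtain k where "k < v" "X = shift v k (base_block b)"
    unfolding translates_def by (auto simp: set_mset_sum)
  with b(1) show ?thesis by (rule that)
qed

lemma count_cyclic_design:
  assumes fin: "finite Bs" and short: "\<forall>b\<in>Bs. short_pair v b" and b: "b \<in> Bs" and k: "k < v"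
  shows "count (cyclic_design v Bs mu) (shift v k (base_block b)) = mu b"
proof -
  have "card {k'. k' < v \<and> shift v k' (base_block b') = shift v k (base_block b)} = (if b' = b then 1 else 0)"
    if "b' \<in> Bs" for b'
  proof -
    have "{k'. k' < v \<and> shift v k' (base_block b') = shift v k (base_block b)} = (if b' = b then {k} else {})"
      using shift_base_block_eq[of v b' b _ k] short b k that by auto
    then show ?thesis by simp
  qed
  then have "count (cyclic_design v Bs mu) (shift v k (base_block b)) = (\<Sum>b'\<in>Bs. if b' = b then mu b' else 0)"
    unfolding cyclic_design_def count_sum count_repeat_mset count_translates by (auto intro: sum.cong)
  then show ?thesis using fin b by simp
qed

text \<open>As \<open>v\<close> is odd, the folded difference \<open>e = min d (v - d)\<close> of two distinct points satisfies
  \<open>0 < e < v / 2\<close>, and a short base block covers the pair in as many of its translates as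
  \<open>e\<close> is among its differences.\<close>
lemma is_CTS_cyclic_design:
  assumes v: "odd v" and fin: "finite Bs" and short: "\<forall>b\<in>Bs. short_pair v b"
    and cover: "\<And>e. 0 < e \<Longrightarrow> 2 * e < v \<Longrightarrow> (\<Sum>b | b \<in> Bs \<and> e \<in> differences b. mu b) = lam"
  shows "is_CTS v lam (cyclic_design v Bs mu)"
  unfolding is_CTS_def
proof (intro conjI allI impI ballI)
  fix B assume "B \<in># cyclic_design v Bs mu"
  then obtain b k where b: "b \<in> Bs" "k < v" "B = shift v k (base_block b)"
    using fin by (rule mem_cyclic_design)
  then show "B \<subseteq> {..<v}" "card B = 3"
    using short shift_subset[of v k] card_shift[OF base_block_subset] card_base_block by auto
next
  fix x y assume xy: "x < v" "y < v" "x \<noteq> y"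
  define d where "d = (y + v - x) mod v"
  have d: "0 < d" "d < v" using xy unfolding d_def by (auto simp: mod_less_double)
  define e where "e = min d (v - d)"
  have "2 * d \<noteq> v" using v by auto
  then have e: "0 < e" "2 * e < v" using d unfolding e_def by (auto simp: min_def)
  have "size (filter_mset (\<lambda>B. {x, y} \<subseteq> B) (cyclic_design v Bs mu)) =
      (\<Sum>b\<in>Bs. mu b * card {t \<in> base_block b. (t + d) mod v \<in> base_block b})"
    unfolding cyclic_design_def filter_mset_sum size_multiset_sum filter_mset_repeat_mset
      size_repeat_mset size_filter_translates d_def
    using card_translates_containing_pair[OF base_block_subset xy(1,2)] short by (auto intro: sum.cong)
  also have "\<dots> = (\<Sum>b\<in>Bs. if e \<in> differences b then mu b else 0)"
    using card_base_block_difference[OF _ d] short unfolding e_def by (auto intro: sum.cong)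
  also have "\<dots> = lam" using cover[OF e] fin by (simp add: sum.inter_filter)
  finally show "size (filter_mset (\<lambda>B. {x, y} \<subseteq> B) (cyclic_design v Bs mu)) = lam" .
next
  show "image_mset (shift v 1) (cyclic_design v Bs mu) = cyclic_design v Bs mu"
    unfolding cyclic_design_def image_mset_sum image_mset_repeat_mset
    using image_mset_shift_translates[OF base_block_subset] short by (auto intro: sum.cong)
qed

lemma fine_c_cyclic_design:
  assumes fin: "finite Bs" and short: "\<forall>b\<in>Bs. short_pair v b" and t: "0 < t"
  shows "fine_c v (cyclic_design v Bs mu) t = card {b \<in> Bs. mu b = t}"
proof -
  let ?M = "cyclic_design v Bs mu" and ?O = "\<lambda>b. orbit v (base_block b)"
  have v: "0 < v" if "b \<in> Bs" for b using short that unfolding short_pair_def by auto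
  have shift0: "shift v 0 (base_block b) = base_block b" if "b \<in> Bs" for b
    using short that by (simp add: shift_0 base_block_subset)
  have "{orbit v B | B. B \<in># ?M \<and> count ?M B = t} = ?O ` {b \<in> Bs. mu b = t}"
  proof (intro equalityI subsetI)
    fix X assume "X \<in> {orbit v B | B. B \<in># ?M \<and> count ?M B = t}"
    then obtain B where B: "X = orbit v B" "B \<in># ?M" "count ?M B = t" by blast
    obtain b k where bk: "b \<in> Bs" "k < v" "B = shift v k (base_block b)"
      using B(2) fin by (rule mem_cyclic_design)
    then have "mu b = t" "X = ?O b"
      using B count_cyclic_design[OF fin short] orbit_shift[OF base_block_subset] short by auto
    then show "X \<in> ?O ` {b \<in> Bs. mu b = t}" using bk(1) by blast
  next
    fix X assume "X \<in> ?O ` {b \<in> Bs. mu b = t}"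
    then obtain b where b: "b \<in> Bs" "mu b = t" "X = ?O b" by blast
    then have "count ?M (base_block b) = t"
      using count_cyclic_design[OF fin short b(1) v[OF b(1)]] shift0 by simp
    then show "X \<in> {orbit v B | B. B \<in># ?M \<and> count ?M B = t}"
      using b t by (metis (mono_tags, lifting) count_greater_zero_iff mem_Collect_eq)
  qed
  moreover have "inj_on ?O {b \<in> Bs. mu b = t}"
  proof (rule inj_onI)
    fix b b' assume b: "b \<in> {b \<in> Bs. mu b = t}" "b' \<in> {b \<in> Bs. mu b = t}" and eq: "?O b = ?O b'"
    have "base_block b \<in> ?O b" using b shift0 v unfolding orbit_def by (metis (mono_tags, lifting) mem_Collect_eq)
    then obtain k where "k < v" "shift v 0 (base_block b) = shift v k (base_block b')"
      using eq b shift0 unfolding orbit_def by auto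
    then show "b = b'" using shift_base_block_eq[of v b b' 0 k] short b by auto
  qed
  ultimately show ?thesis unfolding fine_c_def by (simp add: card_image)
qed

section \<open>Skolem sequences\<close>

text \<open>\<open>a j\<close> and \<open>a j + j\<close> are the two positions of \<open>j\<close> in the Skolem sequence.\<close>
definition skolem_sequence :: "nat \<Rightarrow> (nat \<Rightarrow> nat) \<Rightarrow> bool" where
  "skolem_sequence n a \<longleftrightarrow> bij_betw (\<lambda>(j, e). a j + e * j) ({1..n} \<times> {0, 1}) {1..2 * n}"

text \<open>Covering suffices: \<open>2n\<close> positions covering \<open>{1, \<dots>, 2n}\<close> are distinct.\<close>
lemma skolem_sequenceI:
  assumes cover: "\<And>m. m \<in> {1..2 * n} \<Longrightarrow> \<exists>j\<in>{1..n}. m = a j \<or> m = a j + j"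
  shows "skolem_sequence n a"
proof -
  let ?f = "\<lambda>(j, e). a j + e * j" and ?S = "{1..n} \<times> {0::nat, 1}"
  have sub: "{1..2 * n} \<subseteq> ?f ` ?S"
  proof
    fix m assume "m \<in> {1..2 * n}"
    then obtain j where j: "j \<in> {1..n}" "m = a j \<or> m = a j + j" using cover by blast
    then have "m = ?f (j, 0) \<or> m = ?f (j, 1)" by auto
    then show "m \<in> ?f ` ?S" using j(1) by blast
  qed
  have card_S: "card ?S = 2 * n" by (simp add: card_cartesian_product)
  then have "card (?f ` ?S) \<le> card {1..2 * n}" using card_image_le[of ?S ?f] by simp
  then have img: "?f ` ?S = {1..2 * n}" using card_mono[OF _ sub] by (intro card_subset_eq[OF _ sub, symmetric]) auto
  then have "inj_on ?f ?S" using card_S by (intro eq_card_imp_inj_on) auto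
  with img show ?thesis unfolding skolem_sequence_def bij_betw_def by simp
qed

lemma skolem_sequence_bounds:
  assumes "skolem_sequence n a" "j \<in> {1..n}"
  shows "0 < a j \<and> a j + j \<le> 2 * n"
proof -
  have "(\<lambda>(j, e). a j + e * j) ` ({1..n} \<times> {0, 1}) = {1..2 * n}"
    using assms(1) unfolding skolem_sequence_def bij_betw_def by simp
  then have "a j \<in> {1..2 * n}" "a j + j \<in> {1..2 * n}" using assms(2) by (force, force)
  then show ?thesis by simp
qed

lemma differences_swap: "differences (q, p) = differences (p, q)"
  unfolding differences_def by auto

lemma skolem_sequence_differences:
  assumes sk: "skolem_sequence n a" and e: "0 < e" "e \<le> 3 * n"
  shows "\<exists>!j. j \<in> {1..n} \<and> e \<in> differences (j, a j + n)"
proof -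
  let ?f = "\<lambda>(j, e). a j + e * j" and ?S = "{1..n} \<times> {0::nat, 1}"
  have bij: "inj_on ?f ?S" "?f ` ?S = {1..2 * n}" using sk unfolding skolem_sequence_def bij_betw_def by auto
  have pos: "0 < a j" if "j \<in> {1..n}" for j using skolem_sequence_bounds[OF sk that] by simp
  show ?thesis
  proof (cases "e \<le> n")
    case True
    show ?thesis
    proof (rule ex1I[of _ e])
      show "e \<in> {1..n} \<and> e \<in> differences (e, a e + n)" using e True by (simp add: differences_def)
    next
      fix j assume "j \<in> {1..n} \<and> e \<in> differences (j, a j + n)"
      then show "j = e" using True pos[of j] by (auto simp: differences_def)
    qed
  next
    case False
    then have "e - n \<in> {1..2 * n}" using e by simp arith
    then have "e - n \<in> ?f ` ?S" using bij(2) by simp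
    then obtain j d where jd: "j \<in> {1..n}" "d \<in> {0, 1}" "e - n = a j + d * j" by fast
    show ?thesis
    proof (rule ex1I[of _ j])
      show "j \<in> {1..n} \<and> e \<in> differences (j, a j + n)"
        using jd False by (auto simp: differences_def)
    next
      fix j' assume j': "j' \<in> {1..n} \<and> e \<in> differences (j', a j' + n)"
      then have "e - n = ?f (j', 0) \<or> e - n = ?f (j', 1)" using False by (auto simp: differences_def)
      then have "(j', 0) = (j, d) \<or> (j', 1) = (j, d)"
        using bij(1) jd j' unfolding inj_on_def by (metis (no_types, lifting) case_prod_conv insertCI mem_Sigma_iff)
      then show "j' = j" by auto
    qed
  qed
qed

text \<open>In order \<open>4s\<close> the pairs
  \<open>(a\<^sub>j, a\<^sub>j + j)\<close> are \<open>(6s - t, 6s + t)\<close> for \<open>j = 2t\<close>; \<open>(2s - t, 2s + t + 1)\<close> for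
  \<open>j = 2t + 1\<close>, \<open>1 \<le> t \<le> s - 2\<close>; \<open>(2s - 1 - t, 2s + t)\<close> for \<open>j = 2t + 1\<close>, \<open>s < t < 2s - 1\<close>;
  and \<open>(s, s + 1)\<close>, \<open>(2s, 4s - 1)\<close>, \<open>(s - 1, 3s)\<close>, \<open>(2s + 1, 6s)\<close> for \<open>j = 1, 2s - 1, 2s + 1, 4s - 1\<close>.
  In order \<open>4s + 1\<close> they are \<open>(6s + 2 - t, 6s + 2 + t)\<close> for \<open>j = 2t\<close>; \<open>(2s - t, 2s + t + 1)\<close> for
  \<open>j = 2t + 1\<close>, \<open>1 \<le> t \<le> s - 2\<close>; \<open>(2s + 1 - t, 2s + 2 + t)\<close> for \<open>j = 2t + 1\<close>, \<open>s \<le> t < 2s\<close>;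
  and \<open>(3s, 3s + 1)\<close>, \<open>(1, 2s)\<close>, \<open>(2s + 1, 6s + 2)\<close> for \<open>j = 1, 2s - 1, 4s + 1\<close>.\<close>
definition skolem_4s :: "nat \<Rightarrow> nat \<Rightarrow> nat" where
  "skolem_4s s j =
    (if even j then 6 * s - j div 2
     else if j = 1 then s
     else if j + 1 < 2 * s then 2 * s - j div 2
     else if j + 1 = 2 * s then 2 * s
     else if j = 2 * s + 1 then s - 1
     else if j + 1 < 4 * s then 2 * s - 1 - j div 2
     else 2 * s + 1)"

definition skolem_4s_plus_1 :: "nat \<Rightarrow> nat \<Rightarrow> nat" where
  "skolem_4s_plus_1 s j =
    (if even j then 6 * s + 2 - j div 2
     else if j = 1 then 3 * s
     else if j + 1 < 2 * s then 2 * s - j div 2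
     else if j + 1 = 2 * s then 1
     else if j < 4 * s + 1 then 2 * s + 1 - j div 2
     else 2 * s + 1)"

lemma skolem_4s_eq:
  assumes "2 \<le> s"
  shows "skolem_4s s (2 * t) = 6 * s - t"
    and "skolem_4s s 1 = s"
    and "0 < t \<Longrightarrow> t + 1 < s \<Longrightarrow> skolem_4s s (2 * t + 1) = 2 * s - t"
    and "skolem_4s s (2 * s - 1) = 2 * s"
    and "skolem_4s s (2 * s + 1) = s - 1"
    and "s < t \<Longrightarrow> t + 1 < 2 * s \<Longrightarrow> skolem_4s s (2 * t + 1) = 2 * s - 1 - t"
    and "skolem_4s s (4 * s - 1) = 2 * s + 1"
  using assms by (simp add: skolem_4s_def; arith)+

lemma skolem_4s_plus_1_eq:
  assumes "2 \<le> s"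
  shows "skolem_4s_plus_1 s (2 * t) = 6 * s + 2 - t"
    and "skolem_4s_plus_1 s 1 = 3 * s"
    and "0 < t \<Longrightarrow> t + 1 < s \<Longrightarrow> skolem_4s_plus_1 s (2 * t + 1) = 2 * s - t"
    and "skolem_4s_plus_1 s (2 * s - 1) = 1"
    and "s \<le> t \<Longrightarrow> t < 2 * s \<Longrightarrow> skolem_4s_plus_1 s (2 * t + 1) = 2 * s + 1 - t"
    and "skolem_4s_plus_1 s (4 * s + 1) = 2 * s + 1"
  using assms by (simp add: skolem_4s_plus_1_def; arith)+

lemma skolem_sequence_4s:
  assumes s: "2 \<le> s"
  shows "skolem_sequence (4 * s) (skolem_4s s)"
proof (rule skolem_sequenceI)
  fix m assume m: "m \<in> {1..2 * (4 * s)}"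
  note a = skolem_4s_eq[OF s]
  consider "m + 1 < s" | "m + 1 = s" | "m = s \<or> m = s + 1" | "s + 1 < m" "m < 2 * s" | "m = 2 * s"
    | "m = 2 * s + 1" | "2 * s + 1 < m" "m < 3 * s" | "m = 3 * s" | "3 * s < m" "m + 1 < 4 * s"
    | "m + 1 = 4 * s" | "4 * s \<le> m" "m < 6 * s" | "m = 6 * s" | "6 * s < m"
    by linarith
  then show "\<exists>j\<in>{1..4 * s}. m = skolem_4s s j \<or> m = skolem_4s s j + j"
  proof cases
    case 1
    then show ?thesis using a(6)[of "2 * s - 1 - m"] m by (intro bexI[of _ "2 * (2 * s - 1 - m) + 1"]) auto
  next
    case 2
    then show ?thesis using a(5) s by (intro bexI[of _ "2 * s + 1"]) auto
  next
    case 3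
    then show ?thesis using a(2) s by (intro bexI[of _ 1]) auto
  next
    case 4
    then show ?thesis using a(3)[of "2 * s - m"] by (intro bexI[of _ "2 * (2 * s - m) + 1"]) auto
  next
    case 5
    then show ?thesis using a(4) s by (intro bexI[of _ "2 * s - 1"]) auto
  next
    case 6
    then show ?thesis using a(7) s by (intro bexI[of _ "4 * s - 1"]) auto
  next
    case 7
    then show ?thesis using a(3)[of "m - 2 * s - 1"] by (intro bexI[of _ "2 * (m - 2 * s - 1) + 1"]) auto
  next
    case 8
    then show ?thesis using a(5) s by (intro bexI[of _ "2 * s + 1"]) auto
  next
    case 9
    then show ?thesis using a(6)[of "m - 2 * s"] by (intro bexI[of _ "2 * (m - 2 * s) + 1"]) auto
  next
    case 10
    then show ?thesis using a(4) s by (intro bexI[of _ "2 * s - 1"]) auto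
  next
    case 11
    then show ?thesis using a(1)[of "6 * s - m"] by (intro bexI[of _ "2 * (6 * s - m)"]) auto
  next
    case 12
    then show ?thesis using a(7) s by (intro bexI[of _ "4 * s - 1"]) auto
  next
    case 13
    then show ?thesis using a(1)[of "m - 6 * s"] m by (intro bexI[of _ "2 * (m - 6 * s)"]) auto
  qed
qed

lemma skolem_sequence_4s_plus_1:
  assumes s: "2 \<le> s"
  shows "skolem_sequence (4 * s + 1) (skolem_4s_plus_1 s)"
proof (rule skolem_sequenceI)
  fix m assume m: "m \<in> {1..2 * (4 * s + 1)}"
  note a = skolem_4s_plus_1_eq[OF s]
  consider "m = 1" | "1 < m" "m \<le> s + 1" | "s + 1 < m" "m < 2 * s" | "m = 2 * s" | "m = 2 * s + 1"
    | "2 * s + 1 < m" "m < 3 * s" | "m = 3 * s \<or> m = 3 * s + 1" | "3 * s + 1 < m" "m \<le> 4 * s + 1"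
    | "4 * s + 1 < m" "m \<le> 6 * s + 1" | "m = 6 * s + 2" | "6 * s + 2 < m"
    using m by (simp add: atLeastAtMost_iff) linarith
  then show "\<exists>j\<in>{1..4 * s + 1}. m = skolem_4s_plus_1 s j \<or> m = skolem_4s_plus_1 s j + j"
  proof cases
    case 1
    then show ?thesis using a(4) s by (intro bexI[of _ "2 * s - 1"]) auto
  next
    case 2
    then show ?thesis using a(5)[of "2 * s + 1 - m"] by (intro bexI[of _ "2 * (2 * s + 1 - m) + 1"]) auto
  next
    case 3
    then show ?thesis using a(3)[of "2 * s - m"] by (intro bexI[of _ "2 * (2 * s - m) + 1"]) auto
  next
    case 4
    then show ?thesis using a(4) s by (intro bexI[of _ "2 * s - 1"]) auto
  next
    case 5
    then show ?thesis using a(6) s by (intro bexI[of _ "4 * s + 1"]) auto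
  next
    case 6
    then show ?thesis using a(3)[of "m - 2 * s - 1"] by (intro bexI[of _ "2 * (m - 2 * s - 1) + 1"]) auto
  next
    case 7
    then show ?thesis using a(2) s by (intro bexI[of _ 1]) auto
  next
    case 8
    then show ?thesis using a(5)[of "m - 2 * s - 2"] by (intro bexI[of _ "2 * (m - 2 * s - 2) + 1"]) auto
  next
    case 9
    then show ?thesis using a(1)[of "6 * s + 2 - m"] by (intro bexI[of _ "2 * (6 * s + 2 - m)"]) auto
  next
    case 10
    then show ?thesis using a(6) s by (intro bexI[of _ "4 * s + 1"]) auto
  next
    case 11
    then show ?thesis using a(1)[of "m - 6 * s - 2"] m by (intro bexI[of _ "2 * (m - 6 * s - 2)"]) auto
  qed
qed

lemma skolem_sequence_4: "skolem_sequence 4 (\<lambda>j. [1, 4, 5, 3] ! (j - 1))"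
proof (rule skolem_sequenceI)
  fix m :: nat assume "m \<in> {1..2 * 4}"
  then have "m \<in> {1, 2, 3, 4, 5, 6, 7, 8}" by auto
  moreover have "{1..4::nat} = {1, 2, 3, 4}" by auto
  ultimately show "\<exists>j\<in>{1..4}. m = [1, 4, 5, 3] ! (j - 1) \<or> m = [1, 4, 5, 3] ! (j - 1) + j" by auto
qed

lemma skolem_sequence_5: "skolem_sequence 5 (\<lambda>j. [8, 1, 4, 2, 5] ! (j - 1))"
proof (rule skolem_sequenceI)
  fix m :: nat assume "m \<in> {1..2 * 5}"
  then have "m \<in> {1, 2, 3, 4, 5, 6, 7, 8, 9, 10}" by (simp add: atLeastAtMost_iff) presburger
  moreover have "{1..5::nat} = {1, 2, 3, 4, 5}" by auto
  ultimately show "\<exists>j\<in>{1..5}. m = [8, 1, 4, 2, 5] ! (j - 1) \<or> m = [8, 1, 4, 2, 5] ! (j - 1) + j" by auto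
qed

lemma skolem_sequence_exists:
  assumes "n mod 4 = 0 \<or> n mod 4 = 1"
  shows "\<exists>a. skolem_sequence n a"
proof -
  define s where "s = n div 4"
  have n: "n = 4 * s \<or> n = 4 * s + 1" using assms unfolding s_def by presburger
  show ?thesis
  proof (cases "2 \<le> s")
    case True
    then show ?thesis using n skolem_sequence_4s skolem_sequence_4s_plus_1 by blast
  next
    case False
    then have "n = 0 \<or> n = 1 \<or> n = 4 \<or> n = 5" using n by auto
    moreover have "skolem_sequence 0 a" for a by (rule skolem_sequenceI) simp
    moreover have "skolem_sequence 1 (\<lambda>_. 1)" by (rule skolem_sequenceI) auto
    ultimately show ?thesis using skolem_sequence_4 skolem_sequence_5 by blast
  qed
qed

section \<open>The triple systems\<close>

text \<open>The pair \<open>(j, a j + n)\<close> stands for \<open>B\<^sub>j\<close>, and \<open>(a j + n, j)\<close> for its mirror image \<open>B\<^sub>j'\<close>;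
  the first component tells them apart, since \<open>a j + n > n\<close>.\<close>
definition skolem_base_pairs :: "nat \<Rightarrow> (nat \<Rightarrow> nat) \<Rightarrow> nat \<Rightarrow> (nat \<times> nat) set" where
  "skolem_base_pairs n a i = (\<lambda>j. (j, a j + n)) ` {1..n} \<union> (\<lambda>j. (a j + n, j)) ` {i<..n}"

definition skolem_multiplicity :: "nat \<Rightarrow> nat \<Rightarrow> nat \<times> nat \<Rightarrow> nat" where
  "skolem_multiplicity n i b = (if fst b \<le> i then 3 else if fst b \<le> n then 2 else 1)"

context
  fixes n i :: nat and a :: "nat \<Rightarrow> nat"
  assumes sk: "skolem_sequence n a" and i: "i \<le> n"
begin

lemma skolem_base_pairs_short: "\<forall>b\<in>skolem_base_pairs n a i. short_pair (6 * n + 1) b"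
proof
  fix b assume "b \<in> skolem_base_pairs n a i"
  then consider j where "j \<in> {1..n}" "b = (j, a j + n)" | j where "j \<in> {i<..n}" "b = (a j + n, j)"
    unfolding skolem_base_pairs_def by blast
  then show "short_pair (6 * n + 1) b"
  proof cases
    case (1 j)
    then show ?thesis using skolem_sequence_bounds[OF sk, of j] unfolding short_pair_def by auto
  next
    case (2 j)
    then show ?thesis using skolem_sequence_bounds[OF sk, of j] unfolding short_pair_def by auto
  qed
qed

lemma skolem_base_pairs_cover_differences:
  assumes e: "0 < e" "2 * e < 6 * n + 1"
  shows "(\<Sum>b | b \<in> skolem_base_pairs n a i \<and> e \<in> differences b. skolem_multiplicity n i b) = 3"
proof -
  have "\<exists>!j. j \<in> {1..n} \<and> e \<in> differences (j, a j + n)"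
    using skolem_sequence_differences[OF sk e(1)] e(2) by simp
  then obtain j where j: "j \<in> {1..n}" "e \<in> differences (j, a j + n)"
    and uniq: "\<And>j'. j' \<in> {1..n} \<Longrightarrow> e \<in> differences (j', a j' + n) \<Longrightarrow> j' = j"
    by (elim ex1E) blast
  have aj: "0 < a j" using skolem_sequence_bounds[OF sk j(1)] by simp
  have "{b. b \<in> skolem_base_pairs n a i \<and> e \<in> differences b} =
      insert (j, a j + n) (if i < j then {(a j + n, j)} else {})"
  proof (intro equalityI subsetI)
    fix b assume b: "b \<in> {b. b \<in> skolem_base_pairs n a i \<and> e \<in> differences b}"
    then consider j' where "j' \<in> {1..n}" "b = (j', a j' + n)" | j' where "j' \<in> {i<..n}" "b = (a j' + n, j')"
      unfolding skolem_base_pairs_def by blast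
    then show "b \<in> insert (j, a j + n) (if i < j then {(a j + n, j)} else {})"
    proof cases
      case (1 j')
      then show ?thesis using b uniq by simp
    next
      case (2 j')
      then have "j' = j" using b uniq[of j'] by (simp add: differences_swap)
      then show ?thesis using 2 by simp
    qed
  next
    fix b assume "b \<in> insert (j, a j + n) (if i < j then {(a j + n, j)} else {})"
    then show "b \<in> {b. b \<in> skolem_base_pairs n a i \<and> e \<in> differences b}"
      using j unfolding skolem_base_pairs_def by (auto simp: differences_swap split: if_splits)
  qed
  moreover have "(j, a j + n) \<noteq> (a j + n, j)" using j aj by simp
  ultimately show ?thesis using j aj by (simp add: skolem_multiplicity_def)
qed

lemma is_CTS_skolem_design:
  "is_CTS (6 * n + 1) 3 (cyclic_design (6 * n + 1) (skolem_base_pairs n a i) (skolem_multiplicity n i))"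
proof (rule is_CTS_cyclic_design)
  show "odd (6 * n + 1)" "finite (skolem_base_pairs n a i)" by (simp_all add: skolem_base_pairs_def)
  show "\<forall>b\<in>skolem_base_pairs n a i. short_pair (6 * n + 1) b" by (rule skolem_base_pairs_short)
  fix e :: nat assume "0 < e" "2 * e < 6 * n + 1"
  then show "(\<Sum>b | b \<in> skolem_base_pairs n a i \<and> e \<in> differences b. skolem_multiplicity n i b) = 3"
    by (rule skolem_base_pairs_cover_differences)
qed

lemma fine_c_skolem_design:
  defines "M \<equiv> cyclic_design (6 * n + 1) (skolem_base_pairs n a i) (skolem_multiplicity n i)"
  shows "fine_c (6 * n + 1) M 1 = n - i" "fine_c (6 * n + 1) M 2 = n - i" "fine_c (6 * n + 1) M 3 = i"
proof -
  let ?Bs = "skolem_base_pairs n a i" and ?mu = "skolem_multiplicity n i"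
  have pos: "a j \<noteq> 0" if "i < j" "j \<le> n" for j using skolem_sequence_bounds[OF sk, of j] that by simp
  have classes: "{b \<in> ?Bs. ?mu b = 3} = (\<lambda>j. (j, a j + n)) ` {1..i}"
    "{b \<in> ?Bs. ?mu b = 2} = (\<lambda>j. (j, a j + n)) ` {i<..n}"
    "{b \<in> ?Bs. ?mu b = 1} = (\<lambda>j. (a j + n, j)) ` {i<..n}"
    using i unfolding skolem_base_pairs_def skolem_multiplicity_def by (auto simp: image_iff pos)
  have inj: "inj_on (\<lambda>j. (j, a j + n)) A" "inj_on (\<lambda>j. (a j + n, j)) A" for A
    by (auto intro: inj_onI)
  have fine: "fine_c (6 * n + 1) M t = card {b \<in> ?Bs. ?mu b = t}" if "0 < t" for t
    unfolding M_def using _ skolem_base_pairs_short that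
    by (rule fine_c_cyclic_design) (simp add: skolem_base_pairs_def)
  show "fine_c (6 * n + 1) M 1 = n - i" "fine_c (6 * n + 1) M 2 = n - i" "fine_c (6 * n + 1) M 3 = i"
    using fine[of 1] fine[of 2] fine[of 3] classes by (simp_all add: card_image inj)
qed

end

lemma admissible_order:
  fixes v n :: nat
  assumes "v mod 24 = 1 \<or> v mod 24 = 7" "n = (v - 1) div 6"
  shows "v = 6 * n + 1" "n mod 4 = 0 \<or> n mod 4 = 1"
proof -
  define k where "k = v div 6"
  have "v mod 6 = v mod 24 mod 6" by (simp add: mod_mod_cancel)
  then have "v mod 6 = 1" using assms(1) by auto
  then have v: "v = 6 * k + 1" and "v mod 24 = 6 * (k mod 4) + 1"
    using mod_mult2_eq[of v 6 4] div_mult_mod_eq[of v 6] unfolding k_def by simp_all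
  then have "k mod 4 = 0 \<or> k mod 4 = 1" using assms(1) by auto
  moreover have "n = k" using v assms(2) by simp
  ultimately show "v = 6 * n + 1" "n mod 4 = 0 \<or> n mod 4 = 1" using v by simp_all
qed

theorem mainTheorem8:
  fixes v n i :: nat
  assumes "v mod 24 = 1 \<or> v mod 24 = 7"
    and "v \<ge> 7"
    and "n = (v - 1) div 6"
    and "i \<le> n"
  shows "\<exists>M. is_CTS v 3 M \<and> fine_c v M 2 = n - i \<and> fine_c v M 3 = i
             \<and> fine_c v M 1 = 3 * n - 2 * (n - i) - 3 * i"
proof -
  obtain a where sk: "skolem_sequence n a"
    using skolem_sequence_exists[OF admissible_order(2)[OF assms(1,3)]] by blast
  define M where "M = cyclic_design v (skolem_base_pairs n a i) (skolem_multiplicity n i)"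
  have "is_CTS v 3 M" "fine_c v M 1 = n - i" "fine_c v M 2 = n - i" "fine_c v M 3 = i"
    unfolding M_def admissible_order(1)[OF assms(1,3)]
    using is_CTS_skolem_design fine_c_skolem_design sk assms(4) by simp_all
  moreover have "3 * n - 2 * (n - i) - 3 * i = n - i" using assms(4) by simp
  ultimately show ?thesis by auto
qed

end
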